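(* For all $t\ge 2$, in $\mathbb{F}_2[w_2,w_3]$ one has \[ r_{2^{t-1}-2}=q_{2^t-4},\qquad w_3r_{2^{t-1}-4}=q_{2^t-5},\qquad r_{2^{t-1}-1}=q_{2^t-2}. \]
   Context: In $\mathbb{F}_2[w_2,w_3]$: $q_0=1$, $q_m=0$ for $m<0$, $q_m=w_2q_{m-2}+w_3q_{m-3}$ for $m\ge1$; $r_0=1$, $r_m=0$ for $m<0$, $r_{m+1}=w_2r_m+w_3^2r_{m-2}$ for $m\ge0$. *)

theory Defs
  imports "HOL-Library.Z2" "HOL-Computational_Algebra.Polynomial"
begin

text \<open>F_2[w2,w3] is modelled as (F_2[w2])[w3] = bit poly poly:
  w2 is the constant (in w3) polynomial X, w3 is the outer indeterminate.\<close>

type_synonym F2w = "bit poly poly"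

definition w2 :: F2w where "w2 = [:[:0, 1:]:]"
definition w3 :: F2w where "w3 = [:0, 1:]"

function q :: "int \<Rightarrow> F2w" where
  "q m = (if m < 0 then 0 else if m = 0 then 1
          else w2 * q (m - 2) + w3 * q (m - 3))"
  by auto
termination by (relation "measure nat") auto

function r :: "int \<Rightarrow> F2w" where
  "r m = (if m < 0 then 0 else if m = 0 then 1
          else w2 * r (m - 1) + w3 ^ 2 * r (m - 3))"
  by auto
termination by (relation "measure nat") auto

declare q.simps[simp del] r.simps[simp del]

end

theory Submission
  imports Defs
begin

text \<open>Over a ring of characteristic 2, squaring is additive, so squaring a two-term linear
  recurrence yields the same recurrence with squared coefficients and doubled lags. Hence
  every such sequence splits as \<open>f m = D m + a D(m - i) + b D(m - j)\<close>, where \<open>D\<close> is the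
  squared sequence spread onto the even indices; this is the power series identity
  \<open>1/(1 + P) = (1 + P)/(1 + P)\<^sup>2\<close>. Evaluating it at even and odd indices gives doubling formulas
  for \<open>q\<close> and \<open>r\<close>, and the three identities follow by induction on \<open>t\<close>, using that
  \<open>q\<^bsub>2\<^sup>k - 3\<^esub>\<close> vanishes.\<close>

lemma power2_add_char2:
  fixes x y :: "'a::comm_semiring_1"
  assumes "(2::'a) = 0"
  shows "(x + y)\<^sup>2 = x\<^sup>2 + y\<^sup>2"
  using power2_sum[of x y] assms by simp

lemma two_F2w: "(2::F2w) = 0"
  by (simp add: numeral_poly)

lemma q_neg [simp]: "m < 0 \<Longrightarrow> q m = 0"
  by (subst q.simps) simp

lemma r_neg [simp]: "m < 0 \<Longrightarrow> r m = 0"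
  by (subst r.simps) simp

lemma q_0 [simp]: "q 0 = 1"
  by (subst q.simps) simp

lemma r_0 [simp]: "r 0 = 1"
  by (subst r.simps) simp

definition even_square :: "(int \<Rightarrow> 'a::comm_semiring_1) \<Rightarrow> int \<Rightarrow> 'a" where
  "even_square f m = (if even m then (f (m div 2))\<^sup>2 else 0)"

lemma even_square_even [simp]: "even_square f (2 * n) = (f n)\<^sup>2"
  by (simp add: even_square_def)

lemma even_square_eq: "m = 2 * n \<Longrightarrow> even_square f m = (f n)\<^sup>2"
  by simp

lemma even_square_odd [simp]: "odd m \<Longrightarrow> even_square f m = 0"
  by (simp add: even_square_def)

lemma even_square_neg: "(\<And>m. m < 0 \<Longrightarrow> f m = 0) \<Longrightarrow> m < 0 \<Longrightarrow> even_square f m = 0"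
  by (simp add: even_square_def)

context
  fixes f :: "int \<Rightarrow> 'a::comm_ring_1" and a b :: 'a and i j :: int
  assumes char2: "(2::'a) = 0"
    and lags: "i > 0" "j > 0"
    and f_neg: "\<And>m. m < 0 \<Longrightarrow> f m = 0"
    and f_0: "f 0 = 1"
    and f_rec: "\<And>m. m > 0 \<Longrightarrow> f m = a * f (m - i) + b * f (m - j)"
begin

lemma even_square_rec:
  assumes "m > 0"
  shows "even_square f m = a\<^sup>2 * even_square f (m - 2 * i) + b\<^sup>2 * even_square f (m - 2 * j)"
proof (cases "even m")
  case True
  then obtain n where m: "m = 2 * n" by blast
  with assms have "n > 0" by simp
  have "m - 2 * i = 2 * (n - i)" "m - 2 * j = 2 * (n - j)" using m by simp_all
  then show ?thesis
    using f_rec[OF \<open>n > 0\<close>] by (simp only: m even_square_even power2_add_char2[OF char2] power_mult_distrib)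
next
  case False
  then show ?thesis by simp
qed

lemma linear_rec_char2_split:
  "f m = even_square f m + a * even_square f (m - i) + b * even_square f (m - j)"
proof (induction "nat m" arbitrary: m rule: less_induct)
  case less
  let ?D = "even_square f"
  consider "m < 0" | "m = 0" | "m > 0" by linarith
  then show ?case
  proof cases
    case 1
    then show ?thesis using lags by (simp add: f_neg even_square_neg[OF f_neg])
  next
    case 2
    have "?D 0 = 1" using even_square_even[of f 0] f_0 by simp
    with 2 lags f_0 show ?thesis by (simp add: even_square_neg[OF f_neg])
  next
    case 3
    have "f m = a * f (m - i) + b * f (m - j)" using f_rec[OF 3] .
    also have "\<dots> = a * (?D (m - i) + a * ?D (m - i - i) + b * ?D (m - i - j))
                   + b * (?D (m - j) + a * ?D (m - j - i) + b * ?D (m - j - j))"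
      using less 3 lags by simp
    also have "\<dots> = (a\<^sup>2 * ?D (m - 2 * i) + b\<^sup>2 * ?D (m - 2 * j)) + a * ?D (m - i) + b * ?D (m - j)
                   + 2 * (a * b * ?D (m - i - j))"
      by (simp add: algebra_simps power2_eq_square)
    also have "\<dots> = ?D m + a * ?D (m - i) + b * ?D (m - j)"
      using even_square_rec[OF 3] char2 by simp
    finally show ?thesis .
  qed
qed

end

lemma q_split: "q m = even_square q m + w2 * even_square q (m - 2) + w3 * even_square q (m - 3)"
  by (rule linear_rec_char2_split[OF two_F2w]; (subst q.simps)?; simp)

lemma r_split: "r m = even_square r m + w2 * even_square r (m - 1) + w3\<^sup>2 * even_square r (m - 3)"
  by (rule linear_rec_char2_split[OF two_F2w]; (subst r.simps)?; simp)

lemma q_double: "q (2 * n) = (q n)\<^sup>2 + w2 * (q (n - 1))\<^sup>2"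
  using q_split[of "2 * n"] even_square_eq[of "2 * n - 2" "n - 1" q] by simp

lemma q_double_plus3: "q (2 * n + 3) = w3 * (q n)\<^sup>2"
  using q_split[of "2 * n + 3"] even_square_eq[of "2 * n" n q] by simp

lemma r_double: "r (2 * n) = (r n)\<^sup>2"
  using r_split[of "2 * n"] by simp

lemma r_double_plus1: "r (2 * n + 1) = w2 * (r n)\<^sup>2 + w3\<^sup>2 * (r (n - 1))\<^sup>2"
  using r_split[of "2 * n + 1"] even_square_eq[of "2 * n - 2" "n - 1" r] by simp

lemma q_two_power_minus3: "k \<ge> 1 \<Longrightarrow> q (2 ^ k - 3) = 0"
proof (induction k rule: nat_induct_at_least)
  case base
  then show ?case by simp
next
  case (Suc k)
  have "(2::int) ^ Suc k - 3 = 2 * (2 ^ k - 3) + 3" by simp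
  then show ?case using q_double_plus3[of "2 ^ k - 3"] Suc.IH by simp
qed

lemma r_q_two_power:
  assumes "k \<ge> 1"
  shows "r (2 ^ k - 2) = q (2 ^ (k + 1) - 4) \<and> r (2 ^ k - 1) = q (2 ^ (k + 1) - 2)"
  using assms
proof (induction k rule: nat_induct_at_least)
  case base
  have "r 1 = w2" by (subst r.simps) simp
  moreover have "q 2 = w2" by (subst q.simps) simp
  ultimately show ?case by simp
next
  case (Suc k)
  define M :: int where "M = 2 ^ k"
  have IH: "r (M - 2) = q (2 * M - 4)" "r (M - 1) = q (2 * M - 2)"
    using Suc.IH by (simp_all add: M_def)
  have q_M: "q (M - 3) = 0" "q (2 * M - 3) = 0"
    using q_two_power_minus3[of k] q_two_power_minus3[of "k + 1"] Suc.hyps by (simp_all add: M_def)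
  have "r (2 * M - 2) = (r (M - 1))\<^sup>2"
    using r_double[of "M - 1"] by (simp add: algebra_simps)
  also have "\<dots> = q (4 * M - 4)"
    using IH q_M q_double[of "2 * M - 2"] by (simp add: algebra_simps)
  finally have r_even: "r (2 * M - 2) = q (4 * M - 4)" .
  have "r (2 * M - 1) = w2 * (q (2 * M - 2))\<^sup>2 + w3\<^sup>2 * (q (2 * M - 4))\<^sup>2"
    using IH r_double_plus1[of "M - 1"] by (simp add: algebra_simps)
  also have "q (2 * M - 4) = (q (M - 2))\<^sup>2"
    using q_M q_double[of "M - 2"] by (simp add: algebra_simps)
  also have "w2 * (q (2 * M - 2))\<^sup>2 + w3\<^sup>2 * ((q (M - 2))\<^sup>2)\<^sup>2 = q (4 * M - 2)"
    using q_double[of "2 * M - 1"] q_double_plus3[of "M - 2"]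
    by (simp add: algebra_simps power_mult_distrib)
  finally have r_odd: "r (2 * M - 1) = q (4 * M - 2)" .
  show ?case using r_even r_odd by (simp add: M_def)
qed

lemma w3_r_q_two_power:
  assumes "k \<ge> 1"
  shows "w3 * r (2 ^ k - 4) = q (2 ^ (k + 1) - 5)"
proof (cases "k = 1")
  case True
  then show ?thesis by simp
next
  case False
  with assms obtain j where k: "k = Suc j" and "j \<ge> 1" by (cases k) auto
  define M :: int where "M = 2 ^ j"
  have "r (M - 2) = q (2 * M - 4)"
    using r_q_two_power[OF \<open>j \<ge> 1\<close>] by (simp add: M_def)
  then have "w3 * r (2 * M - 4) = q (4 * M - 5)"
    using r_double[of "M - 2"] q_double_plus3[of "2 * M - 4"] by (simp add: algebra_simps)
  then show ?thesis by (simp add: k M_def)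
qed

theorem mainTheorem16:
  fixes t :: nat
  assumes "t \<ge> 2"
  shows "r (2 ^ (t - 1) - 2) = q (2 ^ t - 4)
       \<and> w3 * r (2 ^ (t - 1) - 4) = q (2 ^ t - 5)
       \<and> r (2 ^ (t - 1) - 1) = q (2 ^ t - 2)"
proof -
  from assms obtain k where t: "t = Suc k" and "k \<ge> 1" by (cases t) auto
  then show ?thesis
    using r_q_two_power[OF \<open>k \<ge> 1\<close>] w3_r_q_two_power[OF \<open>k \<ge> 1\<close>] by simp
qed

end
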